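(* Let $B$ be a connected building set on $V=[n]$ and let $\emptyset=I_0\subsetneq I_1\subsetneq\cdots\subsetneq I_k=V$ be a splitting chain of $B$. For $i\in V$ let $l(i)$ be the unique $j$ with $i\in I_j\setminus I_{j-1}$, and let $S_i$ be the largest (by inclusion) element of $B$ containing $i$ and contained in $I_{l(i)-1}\cup\{i\}$. Then $S_i=V$ for exactly one $i\in V$, the sets $S_i$ ($i\in V$) are pairwise distinct, and $N=\{S_i: i\in V\}\setminus\{V\}$ is a maximal (with respect to inclusion) nested set of $B$.
   Context: A building set on a finite set $V$ is a collection $B$ of nonempty subsets of $V$ such that $\{v\}\in B$ for all $v\in V$ and such that $I,J\in B$, $I\cap J\neq\emptyset$ imply $I\cup J\in B$. It is connected if $V\in B$, and discrete if it consists only of the singletons. For $I\subseteq V$, the restriction is $B|_I=\{J\in B: J\subseteq I\}$ and the contraction is $B/I=\{J\subseteq V\setminus I: J\neq\emptyset,\ J\in B\text{ or }J\cup I'\in B\text{ for some }I'\subseteq I\}$. A splitting chain of $B$ is a chain $\emptyset=I_0\subsetneq I_1\subsetneq\cdots\subsetneq I_k=V$ such that for every $1\le j\le k$ the building set $(B|_{I_j})/I_{j-1}$ on $I_j\setminus I_{j-1}$ is discrete. For a connected building set $B$ on $V$, a nested set is a subcollection $N\subseteq B\setminus\{V\}$ such that (N1) any two members of $N$ are either comparable by inclusion or disjoint, and (N2) the union of any $p\ge2$ pairwise disjoint members of $N$ does not belong to $B$. (Since $B$ is closed under unions of intersecting members, the largest element $S_i$ above exists.) *)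

theory Defs
  imports Main
begin

definition building_set :: "'a set \<Rightarrow> 'a set set \<Rightarrow> bool" where
  "building_set V B \<longleftrightarrow>
     (\<forall>J\<in>B. J \<noteq> {} \<and> J \<subseteq> V) \<and>
     (\<forall>v\<in>V. {v} \<in> B) \<and>
     (\<forall>I\<in>B. \<forall>J\<in>B. I \<inter> J \<noteq> {} \<longrightarrow> I \<union> J \<in> B)"

definition connected_bs :: "'a set \<Rightarrow> 'a set set \<Rightarrow> bool" where
  "connected_bs V B \<longleftrightarrow> building_set V B \<and> V \<in> B"

definition discrete_bs :: "'a set \<Rightarrow> 'a set set \<Rightarrow> bool" where
  "discrete_bs V B \<longleftrightarrow> B = (\<lambda>v. {v}) ` V"

definition restrict_bs :: "'a set set \<Rightarrow> 'a set \<Rightarrow> 'a set set" where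
  "restrict_bs B I = {J \<in> B. J \<subseteq> I}"

definition contract_bs :: "'a set \<Rightarrow> 'a set set \<Rightarrow> 'a set \<Rightarrow> 'a set set" where
  "contract_bs V B I = {J. J \<subseteq> V - I \<and> J \<noteq> {} \<and>
      (J \<in> B \<or> (\<exists>I'. I' \<subseteq> I \<and> J \<union> I' \<in> B))}"

definition splitting_chain :: "'a set \<Rightarrow> 'a set set \<Rightarrow> nat \<Rightarrow> (nat \<Rightarrow> 'a set) \<Rightarrow> bool" where
  "splitting_chain V B k I \<longleftrightarrow>
     I 0 = {} \<and> I k = V \<and> (\<forall>j. 1 \<le> j \<and> j \<le> k \<longrightarrow> I (j - 1) \<subset> I j) \<and>
     (\<forall>j. 1 \<le> j \<and> j \<le> k \<longrightarrow>
        discrete_bs (I j - I (j - 1)) (contract_bs (I j) (restrict_bs B (I j)) (I (j - 1))))"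

definition chain_level :: "nat \<Rightarrow> (nat \<Rightarrow> 'a set) \<Rightarrow> 'a \<Rightarrow> nat" where
  "chain_level k I i = (THE j. 1 \<le> j \<and> j \<le> k \<and> i \<in> I j - I (j - 1))"

definition chain_S :: "'a set set \<Rightarrow> nat \<Rightarrow> (nat \<Rightarrow> 'a set) \<Rightarrow> 'a \<Rightarrow> 'a set" where
  "chain_S B k I i = (THE S. S \<in> B \<and> i \<in> S \<and> S \<subseteq> I (chain_level k I i - 1) \<union> {i} \<and>
      (\<forall>T\<in>B. i \<in> T \<and> T \<subseteq> I (chain_level k I i - 1) \<union> {i} \<longrightarrow> T \<subseteq> S))"

definition nested_set :: "'a set \<Rightarrow> 'a set set \<Rightarrow> 'a set set \<Rightarrow> bool" where
  "nested_set V B N \<longleftrightarrow>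
     N \<subseteq> B - {V} \<and>
     (\<forall>X\<in>N. \<forall>Y\<in>N. X \<subseteq> Y \<or> Y \<subseteq> X \<or> X \<inter> Y = {}) \<and>
     (\<forall>F. F \<subseteq> N \<longrightarrow> 2 \<le> card F \<longrightarrow> pairwise disjnt F \<longrightarrow> \<Union>F \<notin> B)"

definition maximal_nested_set :: "'a set \<Rightarrow> 'a set set \<Rightarrow> 'a set set \<Rightarrow> bool" where
  "maximal_nested_set V B N \<longleftrightarrow>
     nested_set V B N \<and> (\<forall>N'. nested_set V B N' \<longrightarrow> N \<subseteq> N' \<longrightarrow> N' = N)"

end

theory Submission
  imports Defs
begin

(*
  Discreteness of the contractions (B|I_j)/I_(j-1) says exactly that a member of B lying
  in I_j contains at most one point of the j-th layer.  Consequently every T in B has a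
  unique "top point" of maximal level, and T is contained in S_top.  In level terms S_i is
  the greatest member of B containing i all of whose other points have smaller level.

  From the top-point principle everything follows quickly:
    the family (S_i) is laminar, j in S_i implies S_j <= S_i, i |-> S_i is injective,
    S_i = V for the top point i of V, a disjoint union of at least two S_j is never in B
    (its top point i gives S_i as one of the parts, containing all others), and a nested
    set N' extending {S_i} \ {V} contains nothing else: a new member T with top point i
    would make S_i the union of T with disjoint members S_j (j in S_i - T) of N'.
*)

definition laminar :: "'a set set \<Rightarrow> bool" where
  "laminar G \<longleftrightarrow> (\<forall>X\<in>G. \<forall>Y\<in>G. X \<subseteq> Y \<or> Y \<subseteq> X \<or> X \<inter> Y = {})"

text \<open>The maximal members of a finite laminar family are pairwise disjoint and cover it.\<close>

lemma laminar_disjoint_cover: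
  assumes "finite G" "laminar G"
  obtains M where "M \<subseteq> G" "pairwise disjnt M" "\<Union>M = \<Union>G"
proof
  let ?M = "{X \<in> G. \<forall>Y\<in>G. X \<subseteq> Y \<longrightarrow> X = Y}"
  show "?M \<subseteq> G" by blast
  show "pairwise disjnt ?M"
  proof (rule pairwiseI)
    fix X Y assume "X \<in> ?M" "Y \<in> ?M" "X \<noteq> Y"
    then have "\<not> X \<subseteq> Y" "\<not> Y \<subseteq> X" "X \<in> G" "Y \<in> G" by auto
    then show "disjnt X Y" using assms(2) unfolding laminar_def disjnt_def by blast
  qed
  show "\<Union>?M = \<Union>G"
  proof
    show "\<Union>G \<subseteq> \<Union>?M"
    proof
      fix x assume "x \<in> \<Union>G"
      then obtain X where X: "X \<in> G" "x \<in> X" by blast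
      then obtain Z where "Z \<in> G" "X \<subseteq> Z" "\<forall>Y\<in>G. Z \<subseteq> Y \<longrightarrow> Z = Y"
        using finite_has_maximal2[OF assms(1)] by metis
      then show "x \<in> \<Union>?M" using X by blast
    qed
  qed blast
qed

text \<open>In a nested set, a member T and a nonempty finite family of members disjoint from T
  never have their union in B: the maximal members of the family together with T form a
  pairwise disjoint subfamily with at least two members, forbidden by condition (N2).\<close>

lemma nested_union_not_in_B:
  assumes N: "nested_set V B N" and T: "T \<in> N" "T \<noteq> {}"
    and G: "G \<subseteq> N" "finite G" "\<Union>G \<noteq> {}" "T \<inter> \<Union>G = {}"
  shows "T \<union> \<Union>G \<notin> B"
proof -
  have "laminar G" using N G(1) unfolding nested_set_def laminar_def by blast
  then obtain M where M: "M \<subseteq> G" "pairwise disjnt M" "\<Union>M = \<Union>G"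
    using laminar_disjoint_cover G(2) by blast
  have "finite M" using M(1) G(2) finite_subset by blast
  moreover have "M \<noteq> {}" using M(3) G(3) by auto
  moreover have "T \<notin> M" using M(3) T(2) G(4) by blast
  ultimately have "2 \<le> card (insert T M)" by (simp add: Suc_le_eq card_gt_0_iff)
  moreover have "pairwise disjnt (insert T M)"
    using M(2,3) G(4) unfolding pairwise_insert disjnt_def by blast
  moreover have "insert T M \<subseteq> N" using T(1) M(1) G(1) by blast
  ultimately have "\<Union>(insert T M) \<notin> B" using N unfolding nested_set_def by blast
  then show ?thesis using M(3) by simp
qed

lemma building_set_Union_common_point:
  assumes "building_set V B" "finite F" "F \<noteq> {}" "F \<subseteq> B" "\<forall>X\<in>F. x \<in> X"
  shows "\<Union>F \<in> B"
  using assms(2-5)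
proof (induction F rule: finite_ne_induct)
  case (insert X F)
  then have "X \<in> B" "\<Union>F \<in> B" "X \<inter> \<Union>F \<noteq> {}" by auto
  then show ?case using assms(1) unfolding building_set_def by simp
qed simp

locale splitting_chain_context =
  fixes V :: "'a set" and B :: "'a set set" and k :: nat and I :: "nat \<Rightarrow> 'a set"
  assumes finite_V: "finite V" and connected: "connected_bs V B"
    and splitting: "splitting_chain V B k I"
begin

abbreviation level :: "'a \<Rightarrow> nat" where "level \<equiv> chain_level k I"
abbreviation S :: "'a \<Rightarrow> 'a set" where "S \<equiv> chain_S B k I"

lemma member_subset: "T \<in> B \<Longrightarrow> T \<subseteq> V"
  and member_nonempty: "T \<in> B \<Longrightarrow> T \<noteq> {}"
  and singleton_in: "v \<in> V \<Longrightarrow> {v} \<in> B"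
  and V_in: "V \<in> B"
  and bs: "building_set V B"
  using connected unfolding connected_bs_def building_set_def by auto

lemma finite_member: "T \<in> B \<Longrightarrow> finite T"
  using member_subset finite_V finite_subset by blast

lemma I_0: "I 0 = {}" and I_k: "I k = V"
  and I_step: "1 \<le> j \<Longrightarrow> j \<le> k \<Longrightarrow> I (j - 1) \<subset> I j"
  and layer_discrete: "1 \<le> j \<Longrightarrow> j \<le> k \<Longrightarrow>
        discrete_bs (I j - I (j - 1)) (contract_bs (I j) (restrict_bs B (I j)) (I (j - 1)))"
  using splitting unfolding splitting_chain_def by auto

lemma I_mono: "j \<le> j' \<Longrightarrow> j' \<le> k \<Longrightarrow> I j \<subseteq> I j'"
proof (induction j' rule: dec_induct)
  case (step j')
  then show ?case using I_step[of "Suc j'"] by auto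
qed simp

lemma level_exists: "i \<in> V \<Longrightarrow> \<exists>j. 1 \<le> j \<and> j \<le> k \<and> i \<in> I j - I (j - 1)"
proof -
  assume "i \<in> V"
  then have ik: "i \<in> I k" using I_k by simp
  define j where "j = (LEAST j. i \<in> I j)"
  have "i \<in> I j" unfolding j_def by (rule LeastI[where P = "\<lambda>j. i \<in> I j", OF ik])
  moreover have "j \<le> k" unfolding j_def by (rule Least_le[where P = "\<lambda>j. i \<in> I j", OF ik])
  moreover have "j \<noteq> 0" using \<open>i \<in> I j\<close> I_0 by (cases j) auto
  moreover have "i \<notin> I (j - 1)"
    using not_less_Least[of "j - 1" "\<lambda>j. i \<in> I j"] \<open>j \<noteq> 0\<close> unfolding j_def by simp
  ultimately show ?thesis by (intro exI[of _ j]) auto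
qed

lemma level_unique:
  assumes "1 \<le> j" "j \<le> k" "i \<in> I j - I (j - 1)" "1 \<le> j'" "j' \<le> k" "i \<in> I j' - I (j' - 1)"
  shows "j = j'"
proof (rule ccontr)
  assume "j \<noteq> j'"
  then have "I j \<subseteq> I (j' - 1) \<or> I j' \<subseteq> I (j - 1)"
    using I_mono[of j "j' - 1"] I_mono[of j' "j - 1"] assms by (cases "j < j'") auto
  with assms show False by blast
qed

lemma level: "i \<in> V \<Longrightarrow> 1 \<le> level i \<and> level i \<le> k \<and> i \<in> I (level i) - I (level i - 1)"
  unfolding chain_level_def
  by (rule theI') (use level_exists level_unique in blast)

lemma in_I_iff: assumes "i \<in> V" "j \<le> k" shows "i \<in> I j \<longleftrightarrow> level i \<le> j"
proof
  assume "i \<in> I j"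
  show "level i \<le> j"
  proof (rule ccontr)
    assume "\<not> level i \<le> j"
    then have "j \<le> level i - 1" "level i - 1 \<le> k" using level[OF assms(1)] by auto
    then have "I j \<subseteq> I (level i - 1)" by (rule I_mono)
    with \<open>i \<in> I j\<close> level[OF assms(1)] show False by blast
  qed
qed (use I_mono[of "level i" j] level[OF assms(1)] assms in blast)

lemma below_level_iff:
  assumes "i \<in> V" "t \<in> V" shows "t \<in> I (level i - 1) \<longleftrightarrow> level t < level i"
proof -
  have "1 \<le> level i" "level i - 1 \<le> k" using level[OF assms(1)] by auto
  then show ?thesis using in_I_iff[OF assms(2), of "level i - 1"] by auto
qed

text \<open>Discreteness of the contraction (B|I_j)/I_(j-1): a member of B inside I_j contains at
  most one point of the layer I_j - I_(j-1).\<close>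

lemma layer_point_unique:
  assumes j: "1 \<le> j" "j \<le> k" and T: "T \<in> B" "T \<subseteq> I j"
    and ab: "a \<in> T - I (j - 1)" "b \<in> T - I (j - 1)"
  shows "a = b"
proof -
  have "T - I (j - 1) \<in> contract_bs (I j) (restrict_bs B (I j)) (I (j - 1))"
    unfolding contract_bs_def restrict_bs_def
    using T ab by (intro CollectI conjI disjI2 exI[of _ "T \<inter> I (j - 1)"]) (auto simp: Un_Diff_Int)
  then obtain v where "T - I (j - 1) = {v}"
    using layer_discrete[OF j] unfolding discrete_bs_def by auto
  with ab show ?thesis by (metis singletonD)
qed

lemma top_point:
  assumes T: "T \<in> B"
  obtains i where "i \<in> T" "\<forall>t\<in>T - {i}. level t < level i"
proof -
  have TV: "T \<subseteq> V" "T \<noteq> {}" "finite T" using T member_subset member_nonempty finite_member by auto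
  define m where "m = Max (level ` T)"
  have "m \<in> level ` T" unfolding m_def using TV by (intro Max_in) auto
  then obtain i where i: "i \<in> T" "level i = m" by blast
  have le: "level t \<le> m" if "t \<in> T" for t unfolding m_def using TV that by simp
  have m: "1 \<le> m" "m \<le> k" using level[of i] i TV by auto
  have TI: "T \<subseteq> I m" using in_I_iff[OF _ m(2)] le TV by blast
  have "level t < m" if t: "t \<in> T" "t \<noteq> i" for t
  proof (rule ccontr)
    assume "\<not> level t < m"
    then have "level t = m" using le[OF t(1)] by simp
    moreover have "t \<in> V" "i \<in> V" using t(1) i(1) TV by auto
    ultimately have "t \<notin> I (m - 1)" "i \<notin> I (m - 1)"
      using in_I_iff[of _ "m - 1"] i(2) m by auto
    then show False using layer_point_unique[OF m T TI, of t i] t i by blast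
  qed
  with i show thesis using that by auto
qed

text \<open>The greatest element defining S_i exists: it is the union of all candidates, which
  lies in B because they share the point i.\<close>

lemma S_characterization:
  assumes "i \<in> V"
  shows "S i \<in> B \<and> i \<in> S i \<and> S i \<subseteq> I (level i - 1) \<union> {i} \<and>
    (\<forall>T\<in>B. i \<in> T \<and> T \<subseteq> I (level i - 1) \<union> {i} \<longrightarrow> T \<subseteq> S i)"
proof -
  let ?F = "{T \<in> B. i \<in> T \<and> T \<subseteq> I (level i - 1) \<union> {i}}"
  have F: "finite ?F" by (rule finite_subset[of _ "Pow V"]) (auto dest: member_subset simp: finite_V)
  have single: "{i} \<in> ?F" using singleton_in assms by auto
  have U: "\<Union>?F \<in> B"
    by (rule building_set_Union_common_point[OF bs F, where x = i]) (use single in auto)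
  have "S i = \<Union>?F" unfolding chain_S_def by (rule the_equality) (use U single in auto)
  then show ?thesis using U single by auto
qed

lemma S_in_B: "i \<in> V \<Longrightarrow> S i \<in> B"
  and S_self: "i \<in> V \<Longrightarrow> i \<in> S i"
  using S_characterization by blast+

lemma S_subset_V: "i \<in> V \<Longrightarrow> S i \<subseteq> V"
  using S_in_B member_subset by blast

lemma S_lower: assumes "i \<in> V" "t \<in> S i" "t \<noteq> i" shows "level t < level i"
  using S_characterization[OF assms(1)] below_level_iff[OF assms(1)] S_subset_V[OF assms(1)] assms
  by blast

lemma S_greatest:
  assumes T: "T \<in> B" "i \<in> T" and lower: "\<forall>t\<in>T - {i}. level t < level i"
  shows "T \<subseteq> S i"
proof -
  have "i \<in> V" "T \<subseteq> V" using T member_subset by auto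
  then have "T \<subseteq> I (level i - 1) \<union> {i}" using lower below_level_iff by blast
  then show ?thesis using S_characterization \<open>i \<in> V\<close> T by blast
qed

lemma member_subset_S_top:
  assumes "T \<in> B" obtains i where "i \<in> T" "T \<subseteq> S i"
  using top_point[OF assms] S_greatest[OF assms] by metis

text \<open>Two sets S_i, S_j that meet are comparable: their union lies in B and is contained
  in S of its top point, which must be i or j.\<close>

lemma S_laminar:
  assumes ij: "i \<in> V" "j \<in> V" and meet: "S i \<inter> S j \<noteq> {}"
  shows "S i \<subseteq> S j \<or> S j \<subseteq> S i"
proof -
  have U: "S i \<union> S j \<in> B" using bs S_in_B ij meet unfolding building_set_def by blast
  obtain t where t: "t \<in> S i \<union> S j" "\<forall>u\<in>(S i \<union> S j) - {t}. level u < level t"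
    using top_point[OF U] .
  have "t = i \<or> t = j"
  proof (rule ccontr)
    assume "\<not> (t = i \<or> t = j)"
    then have "level i < level t" "level j < level t" "t \<noteq> i" "t \<noteq> j"
      using t(2) S_self[OF ij(1)] S_self[OF ij(2)] by auto
    then show False using t(1) S_lower[OF ij(1), of t] S_lower[OF ij(2), of t] by auto
  qed
  then show ?thesis using S_greatest[OF U _ t(2)] t(1) by blast
qed

text \<open>A point j \<noteq> i of S_i has lower level, so S_j cannot reach back to i; with
  laminarity this makes S monotone along membership.\<close>

lemma S_not_above: assumes "i \<in> V" "j \<in> S i" "j \<noteq> i" shows "i \<notin> S j"
proof
  assume "i \<in> S j"
  have "j \<in> V" using assms S_subset_V by blast
  then show False using S_lower[OF assms] S_lower[OF \<open>j \<in> V\<close> \<open>i \<in> S j\<close>] assms(3) by simp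
qed

lemma S_subset_of_member: assumes "i \<in> V" "j \<in> S i" shows "S j \<subseteq> S i"
proof (cases "j = i")
  case False
  have "j \<in> V" using assms S_subset_V by blast
  then show ?thesis
    using S_laminar[OF assms(1) \<open>j \<in> V\<close>] S_self[OF \<open>j \<in> V\<close>] S_self[OF assms(1)]
      S_not_above[OF assms False] assms(2) by blast
qed simp

lemma S_inj: "inj_on S V"
proof (rule inj_onI, rule ccontr)
  fix i j assume ij: "i \<in> V" "j \<in> V" "S i = S j" "i \<noteq> j"
  then have "j \<in> S i" "i \<in> S j" using S_self by auto
  then show False using S_not_above[OF ij(1)] ij(4) by blast
qed

lemma S_eq_V_unique: "\<exists>!i. i \<in> V \<and> S i = V"
proof -
  obtain i where "i \<in> V" "V \<subseteq> S i" using member_subset_S_top[OF V_in] .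
  then have "i \<in> V \<and> S i = V" using S_subset_V by blast
  then show ?thesis using S_inj unfolding inj_on_def by blast
qed

text \<open>Condition (N2) for the sets S_i: the top point i of a disjoint union of at least
  two of them gives S_i as one of the parts, and S_i would contain all the others.\<close>

lemma S_disjoint_union_not_in_B:
  assumes F: "F \<subseteq> S ` V" "2 \<le> card F" "pairwise disjnt F"
  shows "\<Union>F \<notin> B"
proof
  assume U: "\<Union>F \<in> B"
  obtain t where t: "t \<in> \<Union>F" "\<forall>u\<in>\<Union>F - {t}. level u < level t" using top_point[OF U] .
  then obtain j where j: "j \<in> V" "S j \<in> F" "t \<in> S j" using F(1) by blast
  have "t = j"
  proof (rule ccontr)
    assume "t \<noteq> j"
    then have "level t < level j" using S_lower[OF j(1,3)] by blast
    moreover have "j \<in> \<Union>F - {t}" using S_self[OF j(1)] j(2) \<open>t \<noteq> j\<close> by blast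
    with t(2) have "level j < level t" by blast
    ultimately show False by simp
  qed
  then have Usub: "\<Union>F \<subseteq> S j" using S_greatest[OF U t(1) t(2)] by simp
  have "finite F" using F(2) card.infinite by force
  then have "\<not> F \<subseteq> {S j}" using F(2) card_mono[of "{S j}" F] by auto
  then obtain y where y: "y \<in> V" "S y \<in> F" "S y \<noteq> S j" using F(1) by blast
  have "y \<in> S j" using Usub S_self[OF y(1)] y(2) by blast
  moreover have "disjnt (S y) (S j)" using F(3) y j(2) unfolding pairwise_def by blast
  ultimately show False using S_self[OF y(1)] unfolding disjnt_def by blast
qed

lemma S_nested: "nested_set V B (S ` V - {V})"
  unfolding nested_set_def
proof (intro conjI allI impI)
  show "S ` V - {V} \<subseteq> B - {V}" using S_in_B by blast
  show "\<forall>X\<in>S ` V - {V}. \<forall>Y\<in>S ` V - {V}. X \<subseteq> Y \<or> Y \<subseteq> X \<or> X \<inter> Y = {}"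
  proof (intro ballI)
    fix X Y assume "X \<in> S ` V - {V}" "Y \<in> S ` V - {V}"
    then obtain i j where "i \<in> V" "j \<in> V" "X = S i" "Y = S j" by blast
    then show "X \<subseteq> Y \<or> Y \<subseteq> X \<or> X \<inter> Y = {}" using S_laminar by blast
  qed
  fix F assume "F \<subseteq> S ` V - {V}" "2 \<le> card F" "pairwise disjnt F"
  then show "\<Union>F \<notin> B" using S_disjoint_union_not_in_B[of F] by blast
qed

text \<open>Maximality: a member T of a nested set containing all proper S_j, with top point i,
  must equal S_i; otherwise S_i is the union of T and the members S_j, j in S_i - T, of the
  nested set, all disjoint from T, contradicting the previous nested-set lemma.\<close>

lemma S_maximal:
  assumes N: "nested_set V B N" "S ` V - {V} \<subseteq> N" and T: "T \<in> N"
  shows "T \<in> S ` V - {V}"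
proof -
  have TB: "T \<in> B" "T \<noteq> V" using N T unfolding nested_set_def by auto
  have lam: "laminar N" using N(1) unfolding nested_set_def laminar_def by blast
  obtain i where i: "i \<in> T" "T \<subseteq> S i" using member_subset_S_top[OF TB(1)] .
  have iV: "i \<in> V" using i TB member_subset by blast
  show ?thesis
  proof (rule ccontr)
    assume "T \<notin> S ` V - {V}"
    then have R: "S i - T \<noteq> {}" using i iV TB(2) by blast
    have RV: "S i - T \<subseteq> V" using S_subset_V[OF iV] by blast
    have new: "S j \<in> N \<and> T \<inter> S j = {}" if j: "j \<in> S i - T" for j
    proof -
      have jV: "j \<in> V" using j RV by blast
      have "i \<notin> S j" using S_not_above[OF iV] j i(1) by blast
      then have SjN: "S j \<in> N" using N(2) jV iV by blast
      have "\<not> T \<subseteq> S j" "\<not> S j \<subseteq> T" using \<open>i \<notin> S j\<close> i(1) S_self[OF jV] j by auto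
      then have "T \<inter> S j = {}" using lam T SjN unfolding laminar_def by blast
      then show ?thesis using SjN by blast
    qed
    have cover: "T \<union> \<Union>(S ` (S i - T)) = S i"
    proof
      show "T \<union> \<Union>(S ` (S i - T)) \<subseteq> S i" using i(2) S_subset_of_member[OF iV] by blast
      show "S i \<subseteq> T \<union> \<Union>(S ` (S i - T))" using S_self RV by blast
    qed
    have "T \<union> \<Union>(S ` (S i - T)) \<notin> B"
    proof (rule nested_union_not_in_B[OF N(1) T])
      show "T \<noteq> {}" using i(1) by blast
      show "S ` (S i - T) \<subseteq> N" "T \<inter> \<Union>(S ` (S i - T)) = {}" using new by blast+
      show "finite (S ` (S i - T))" using RV finite_V finite_subset by blast
      show "\<Union>(S ` (S i - T)) \<noteq> {}" using R S_self RV by blast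
    qed
    then show False using cover S_in_B[OF iV] by simp
  qed
qed

lemma S_maximal_nested: "maximal_nested_set V B (S ` V - {V})"
  unfolding maximal_nested_set_def using S_nested S_maximal by blast

end

theorem mainTheorem3:
  fixes n k :: nat and B :: "nat set set" and I :: "nat \<Rightarrow> nat set"
  assumes "connected_bs {1..n} B"
    and "splitting_chain {1..n} B k I"
  shows "(\<exists>!i. i \<in> {1..n} \<and> chain_S B k I i = {1..n})
    \<and> inj_on (chain_S B k I) {1..n}
    \<and> maximal_nested_set {1..n} B (chain_S B k I ` {1..n} - {{1..n}})"
proof -
  interpret splitting_chain_context "{1..n}" B k I
    using assms by unfold_locales auto
  show ?thesis using S_eq_V_unique S_inj S_maximal_nested by blast
qed

end
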